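(* Let $d\ge1$, $r\ge1$, $n\ge d+2$, and let $K$ be a set of $d$-simplices of $K_n^d$ such that every $d$-hypercut $H$ satisfies $|\mathrm{Supp}(H)\cap K|\ge r$. Then the facet graph $G_d(K)$ is $(d+r-1)$-connected.
   Context: Fix a field $\mathbb F$. A $d$-simplex is a $(d+1)$-element subset of $[n]$ oriented by increasing order; $K_n^d$ is the complex of all subsets of $[n]$ of size at most $d+1$. For a simplex $\rho$ and $\tau=\rho\setminus\{p\}$ with $p$ the $i$-th smallest element of $\rho$, $\mathrm{sign}(\rho,\tau)=(-1)^{i-1}$. A $d$-cochain is a formal $\mathbb F$-combination of $d$-simplices; the coboundary is $\delta\tau=\sum_{p\in[n]\setminus\tau}\mathrm{sign}(\tau\cup\{p\},\tau)(\tau\cup\{p\})$, extended linearly. A $d$-cocycle is a $d$-cochain $Z$ with $\delta Z=0$; a $d$-hypercut is a nonzero $d$-cocycle $H$ such that every $d$-cocycle supported in $\mathrm{Supp}(H)$ is a scalar multiple of $H$. The facet graph $G_d(K)$ has vertex set $K$, two $d$-simplices adjacent iff they share a $(d-1)$-face. A graph is $k$-connected if deleting any set of fewer than $k$ of its vertices leaves a nonempty connected graph. *)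

theory Defs
  imports Main
begin

text \<open>A d-cochain over a field 'a is a function from nat sets to 'a vanishing outside
  the d-simplices; its value at a simplex is the coefficient of that simplex.\<close>

definition simplices :: "nat \<Rightarrow> nat \<Rightarrow> nat set set" where
  "simplices n k = {s. s \<subseteq> {1..n} \<and> card s = k + 1}"

definition cochain :: "nat \<Rightarrow> nat \<Rightarrow> (nat set \<Rightarrow> 'a::field) \<Rightarrow> bool" where
  "cochain n d f \<longleftrightarrow> (\<forall>s. s \<notin> simplices n d \<longrightarrow> f s = 0)"

text \<open>sign(rho, rho - {p}) = (-1)^(i-1) where p is the i-th smallest element of rho.\<close>
definition simplex_sign :: "nat set \<Rightarrow> nat \<Rightarrow> 'a::field" where
  "simplex_sign \<rho> p = (-1) ^ card {q \<in> \<rho>. q < p}"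

definition coboundary :: "nat \<Rightarrow> nat \<Rightarrow> (nat set \<Rightarrow> 'a::field) \<Rightarrow> nat set \<Rightarrow> 'a" where
  "coboundary n d f \<rho> =
     (if \<rho> \<in> simplices n (d + 1) then (\<Sum>p\<in>\<rho>. simplex_sign \<rho> p * f (\<rho> - {p})) else 0)"

definition cocycle :: "nat \<Rightarrow> nat \<Rightarrow> (nat set \<Rightarrow> 'a::field) \<Rightarrow> bool" where
  "cocycle n d f \<longleftrightarrow> cochain n d f \<and> (\<forall>\<rho>. coboundary n d f \<rho> = 0)"

definition supp :: "(nat set \<Rightarrow> 'a::field) \<Rightarrow> nat set set" where
  "supp f = {s. f s \<noteq> 0}"

definition hypercut :: "nat \<Rightarrow> nat \<Rightarrow> (nat set \<Rightarrow> 'a::field) \<Rightarrow> bool" where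
  "hypercut n d H \<longleftrightarrow> cocycle n d H \<and> H \<noteq> (\<lambda>_. 0) \<and>
     (\<forall>Z. cocycle n d Z \<and> supp Z \<subseteq> supp H \<longrightarrow> (\<exists>c. Z = (\<lambda>s. c * H s)))"

text \<open>Facet graph: two d-simplices are adjacent iff they are distinct and share a
  (d-1)-face, i.e. their intersection has d elements.\<close>
definition facet_adj :: "nat \<Rightarrow> nat set \<Rightarrow> nat set \<Rightarrow> bool" where
  "facet_adj d s t \<longleftrightarrow> s \<noteq> t \<and> card (s \<inter> t) = d"

definition graph_connected :: "('v \<Rightarrow> 'v \<Rightarrow> bool) \<Rightarrow> 'v set \<Rightarrow> bool" where
  "graph_connected E V \<longleftrightarrow> V \<noteq> {} \<and>
     (\<forall>x\<in>V. \<forall>y\<in>V. (\<lambda>a b. a \<in> V \<and> b \<in> V \<and> E a b)\<^sup>*\<^sup>* x y)"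

definition k_connected :: "('v \<Rightarrow> 'v \<Rightarrow> bool) \<Rightarrow> 'v set \<Rightarrow> nat \<Rightarrow> bool" where
  "k_connected E V k \<longleftrightarrow>
     (\<forall>S. S \<subseteq> V \<and> finite S \<and> card S < k \<longrightarrow> graph_connected E (V - S))"

end

theory Submission
  imports Defs
begin

text \<open>For a \<open>(d - 2)\<close>-simplex \<open>\<nu>\<close> and a nontrivial cut \<open>X\<close> of the remaining vertices, a suitably
  signed part of the coboundary of \<open>\<nu>\<close> has a nonzero coboundary supported on the facets
  \<open>\<nu> \<union> {x, y}\<close> with \<open>x \<in> X\<close>, \<open>y \<notin> X\<close>, and this cocycle contains a hypercut. So after deleting at
  most \<open>r - 1\<close> facets, \<open>K\<close> still crosses every such cut, i.e. all links of \<open>(d - 2)\<close>-faces are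
  connected graphs. Such a complex stays connected after deleting fewer than \<open>d\<close> further
  facets, by induction on \<open>d\<close>: the surviving facets through a vertex lying in fewer than \<open>d - 1\<close>
  deleted facets are connected (its link satisfies the same hypothesis one dimension lower),
  every surviving facet contains such a vertex, and any two such vertices lie in a common
  surviving facet.\<close>

lemma simplex_sign_nonzero [simp]: "(simplex_sign s p :: 'a::field) \<noteq> 0"
  unfolding simplex_sign_def by simp

lemma simplex_sign_swap:
  assumes "finite \<rho>" "p \<in> \<rho>" "q \<in> \<rho>" "p \<noteq> q"
  shows "simplex_sign \<rho> p * simplex_sign (\<rho> - {p}) q
       + simplex_sign \<rho> q * simplex_sign (\<rho> - {q}) p = (0 :: 'a::field)"
proof -
  have ordered: "simplex_sign \<rho> p * simplex_sign (\<rho> - {p}) q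
       + simplex_sign \<rho> q * simplex_sign (\<rho> - {q}) p = (0 :: 'a)"
    if "p \<in> \<rho>" "q \<in> \<rho>" "p < q" for p q
  proof -
    have below_p: "{x \<in> \<rho> - {q}. x < p} = {x \<in> \<rho>. x < p}" using \<open>p < q\<close> by auto
    have below_q: "{x \<in> \<rho> - {p}. x < q} = {x \<in> \<rho>. x < q} - {p}" by auto
    have "card {x \<in> \<rho>. x < q} = Suc (card ({x \<in> \<rho>. x < q} - {p}))"
      using that \<open>finite \<rho>\<close> by (intro card.remove) auto
    then show ?thesis unfolding simplex_sign_def below_p below_q by simp
  qed
  show ?thesis
  proof (cases "p < q")
    case True
    then show ?thesis using ordered assms by blast
  next
    case False
    then have "q < p" using \<open>p \<noteq> q\<close> by simp
    then show ?thesis using ordered[of q p] assms by (simp add: add.commute)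
  qed
qed

lemma sum_offdiagonal_antisym:
  fixes g :: "'b \<Rightarrow> 'b \<Rightarrow> 'a::ab_group_add"
  assumes "finite A" "\<And>p q. p \<in> A \<Longrightarrow> q \<in> A \<Longrightarrow> p \<noteq> q \<Longrightarrow> g p q + g q p = 0"
  shows "(\<Sum>p\<in>A. \<Sum>q\<in>A - {p}. g p q) = 0"
  using assms
proof (induction A rule: finite_induct)
  case empty
  then show ?case by simp
next
  case (insert a F)
  have drop_p: "insert a F - {p} = insert a (F - {p})" if "p \<in> F" for p
    using that insert.hyps by auto
  have "(\<Sum>p\<in>insert a F. \<Sum>q\<in>insert a F - {p}. g p q)
      = (\<Sum>q\<in>F. g a q) + (\<Sum>p\<in>F. g p a + (\<Sum>q\<in>F - {p}. g p q))"
    using insert.hyps by (simp add: drop_p)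
  also have "\<dots> = (\<Sum>q\<in>F. g a q + g q a) + (\<Sum>p\<in>F. \<Sum>q\<in>F - {p}. g p q)"
    by (simp add: sum.distrib algebra_simps)
  also have "(\<Sum>q\<in>F. g a q + g q a) = 0"
    using insert by (intro sum.neutral) auto
  also have "(\<Sum>p\<in>F. \<Sum>q\<in>F - {p}. g p q) = 0"
    using insert by auto
  finally show ?case by simp
qed

lemma finite_simplices: "finite (simplices n k)"
  unfolding simplices_def by (rule finite_subset[of _ "Pow {1..n}"]) auto

lemma coboundary_simplex:
  assumes "\<sigma> \<in> simplices n (d + 1)"
  shows "coboundary n d f \<sigma> = (\<Sum>p\<in>\<sigma>. simplex_sign \<sigma> p * f (\<sigma> - {p}))"
  using assms unfolding coboundary_def by simp

lemma supp_cocycle: "cocycle n d Z \<Longrightarrow> supp Z \<subseteq> simplices n d"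
  unfolding cocycle_def cochain_def supp_def by auto

lemma cocycle_coboundary:
  assumes "1 \<le> d"
  shows "cocycle n d (coboundary n (d - 1) (f :: nat set \<Rightarrow> 'a::field))"
  unfolding cocycle_def
proof
  have dd: "d - 1 + 1 = d" using assms by simp
  show "cochain n d (coboundary n (d - 1) f)"
    unfolding cochain_def coboundary_def dd by simp
  show "\<forall>\<rho>. coboundary n d (coboundary n (d - 1) f) \<rho> = 0"
  proof
    fix \<rho>
    show "coboundary n d (coboundary n (d - 1) f) \<rho> = 0"
    proof (cases "\<rho> \<in> simplices n (d + 1)")
      case False
      then show ?thesis by (simp add: coboundary_def)
    next
      case True
      then have "finite \<rho>" and card_\<rho>: "card \<rho> = d + 2" and "\<rho> \<subseteq> {1..n}"
        unfolding simplices_def using finite_subset by auto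
      have facet: "\<rho> - {p} \<in> simplices n (d - 1 + 1)" if "p \<in> \<rho>" for p
        using that \<open>finite \<rho>\<close> card_\<rho> \<open>\<rho> \<subseteq> {1..n}\<close> assms unfolding simplices_def by auto
      let ?g = "\<lambda>p q. simplex_sign \<rho> p * simplex_sign (\<rho> - {p}) q * f (\<rho> - {p} - {q})"
      have "coboundary n d (coboundary n (d - 1) f) \<rho> = (\<Sum>p\<in>\<rho>. \<Sum>q\<in>\<rho> - {p}. ?g p q)"
        using True facet
        by (simp add: coboundary_simplex sum_distrib_left mult.assoc del: simplices_def)
      also have "\<dots> = 0"
      proof (rule sum_offdiagonal_antisym[OF \<open>finite \<rho>\<close>])
        fix p q assume pq: "p \<in> \<rho>" "q \<in> \<rho>" "p \<noteq> q"
        have "?g p q + ?g q p = (simplex_sign \<rho> p * simplex_sign (\<rho> - {p}) q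
            + simplex_sign \<rho> q * simplex_sign (\<rho> - {q}) p) * f (\<rho> - {p} - {q})"
          by (simp add: algebra_simps Diff_insert2[symmetric] insert_commute)
        then show "?g p q + ?g q p = 0"
          by (simp add: simplex_sign_swap[OF \<open>finite \<rho>\<close> pq])
      qed
      finally show ?thesis .
    qed
  qed
qed

lemma cocycle_diff_scaled:
  fixes A B :: "nat set \<Rightarrow> 'a::field"
  assumes "cocycle n d A" "cocycle n d B"
  shows "cocycle n d (\<lambda>s. A s - c * B s)"
proof -
  have "coboundary n d (\<lambda>s. A s - c * B s) \<rho> = coboundary n d A \<rho> - c * coboundary n d B \<rho>" for \<rho>
    unfolding coboundary_def by (simp add: algebra_simps sum_subtractf sum_distrib_left)
  then show ?thesis using assms unfolding cocycle_def cochain_def by simp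
qed

lemma hypercut_in_supp:
  fixes Z :: "nat set \<Rightarrow> 'a::field"
  assumes "cocycle n d Z" "Z \<noteq> (\<lambda>_. 0)"
  shows "\<exists>H :: nat set \<Rightarrow> 'a. hypercut n d H \<and> supp H \<subseteq> supp Z"
proof -
  let ?P = "\<lambda>H :: nat set \<Rightarrow> 'a. cocycle n d H \<and> H \<noteq> (\<lambda>_. 0) \<and> supp H \<subseteq> supp Z"
  obtain H where PH: "?P H" and minimal: "\<And>H'. ?P H' \<Longrightarrow> card (supp H) \<le> card (supp H')"
    using ex_has_least_nat[of ?P Z "\<lambda>H. card (supp H)"] assms by blast
  have "hypercut n d H"
    unfolding hypercut_def
  proof (intro conjI allI impI)
    show "cocycle n d H" "H \<noteq> (\<lambda>_. 0)" using PH by auto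
    fix Z' :: "nat set \<Rightarrow> 'a"
    assume Z': "cocycle n d Z' \<and> supp Z' \<subseteq> supp H"
    obtain s where s: "H s \<noteq> 0" using PH by auto
    define c where "c = Z' s / H s"
    define W where "W = (\<lambda>x. Z' x - c * H x)"
    have "cocycle n d W" unfolding W_def using cocycle_diff_scaled Z' PH by blast
    have "W s = 0" unfolding W_def c_def using s by simp
    then have "supp W \<subset> supp H"
      using Z' s unfolding W_def supp_def by auto
    then have "card (supp W) < card (supp H)"
      using PH supp_cocycle finite_simplices by (meson psubset_card_mono rev_finite_subset)
    then have "W = (\<lambda>_. 0)"
      using minimal[of W] \<open>cocycle n d W\<close> \<open>supp W \<subset> supp H\<close> PH by fastforce
    then have "Z' = (\<lambda>x. c * H x)" unfolding W_def by (auto simp: fun_eq_iff dest: fun_cong)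
    then show "\<exists>c. Z' = (\<lambda>s. c * H s)" by blast
  qed
  then show ?thesis using PH by blast
qed

text \<open>The part of the coboundary of \<open>\<nu>\<close> carried by the vertices in \<open>X\<close>. Its own coboundary
  cancels on every \<open>\<nu> \<union> {u, w}\<close> except those with exactly one of \<open>u, w\<close> in \<open>X\<close>.\<close>

definition cut_cochain :: "nat set \<Rightarrow> nat set \<Rightarrow> nat set \<Rightarrow> 'a::field" where
  "cut_cochain \<nu> X \<tau> =
     (if \<nu> \<subseteq> \<tau> \<and> is_singleton (\<tau> - \<nu>) \<and> \<tau> - \<nu> \<subseteq> X then simplex_sign \<tau> (the_elem (\<tau> - \<nu>)) else 0)"

lemma cut_cochain_insert:
  assumes "w \<notin> \<nu>"
  shows "cut_cochain \<nu> X (insert w \<nu>) = (if w \<in> X then simplex_sign (insert w \<nu>) w else 0)"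
proof -
  have "insert w \<nu> - \<nu> = {w}" using assms by auto
  then show ?thesis unfolding cut_cochain_def by (simp add: subset_insertI)
qed

lemma coboundary_cut_cochain_pair:
  assumes "1 \<le> d" "\<sigma> \<in> simplices n d" "\<sigma> = insert u (insert w \<nu>)"
    and "finite \<nu>" "u \<notin> \<nu>" "w \<notin> \<nu>" "u \<noteq> w"
  shows "coboundary n (d - 1) (cut_cochain \<nu> X) \<sigma>
     = (if w \<in> X then simplex_sign \<sigma> u * simplex_sign (\<sigma> - {u}) w else 0)
     + (if u \<in> X then simplex_sign \<sigma> w * simplex_sign (\<sigma> - {w}) u else (0 :: 'a::field))"
proof -
  have minus_u: "\<sigma> - {u} = insert w \<nu>" and minus_w: "\<sigma> - {w} = insert u \<nu>"
    using assms by auto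
  have "(\<Sum>p\<in>\<nu>. simplex_sign \<sigma> p * (cut_cochain \<nu> X (\<sigma> - {p}) :: 'a)) = 0"
    by (intro sum.neutral) (auto simp: cut_cochain_def)
  then show ?thesis
    using assms minus_u minus_w by (simp add: coboundary_simplex cut_cochain_insert)
qed

lemma coboundary_cut_cochain_nonzero_crossing:
  assumes "1 \<le> d" "\<sigma> \<in> simplices n d" "finite \<nu>"
    and nonzero: "coboundary n (d - 1) (cut_cochain \<nu> X) \<sigma> \<noteq> (0 :: 'a::field)"
  shows "\<exists>x\<in>X. \<exists>y. y \<notin> X \<and> y \<notin> \<nu> \<and> \<sigma> = insert x (insert y \<nu>)"
proof -
  have "\<sigma> \<in> simplices n (d - 1 + 1)" using assms by simp
  then obtain p where "p \<in> \<sigma>" and "cut_cochain \<nu> X (\<sigma> - {p}) \<noteq> (0 :: 'a)"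
    using nonzero coboundary_simplex by (metis (no_types, lifting) mult_zero_right sum.neutral)
  then obtain x where x: "\<nu> \<subseteq> \<sigma> - {p}" "\<sigma> - {p} - \<nu> = {x}" "x \<in> X"
    unfolding cut_cochain_def by (auto simp: is_singleton_def split: if_splits)
  then have \<sigma>: "\<sigma> = insert p (insert x \<nu>)" and "p \<notin> \<nu>" "x \<notin> \<nu>" "p \<noteq> x"
    using \<open>p \<in> \<sigma>\<close> by blast+
  have "finite \<sigma>" using \<open>finite \<nu>\<close> \<sigma> by simp
  show ?thesis
  proof (cases "p \<in> X")
    case True
    have "coboundary n (d - 1) (cut_cochain \<nu> X) \<sigma>
        = simplex_sign \<sigma> p * simplex_sign (\<sigma> - {p}) x + simplex_sign \<sigma> x * simplex_sign (\<sigma> - {x}) p"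
      using coboundary_cut_cochain_pair[OF assms(1,2) \<sigma> \<open>finite \<nu>\<close> \<open>p \<notin> \<nu>\<close> \<open>x \<notin> \<nu>\<close> \<open>p \<noteq> x\<close>, of X]
        True x(3) by (simp add: add.commute)
    also have "\<dots> = (0 :: 'a)"
      using \<sigma> \<open>p \<noteq> x\<close> by (intro simplex_sign_swap[OF \<open>finite \<sigma>\<close>]) auto
    finally show ?thesis using nonzero by simp
  next
    case False
    then show ?thesis using \<sigma> x(3) \<open>p \<notin> \<nu>\<close> by blast
  qed
qed

text \<open>The link of every \<open>(d - 2)\<close>-face \<open>\<nu>\<close> is connected as a graph on \<open>V - \<nu>\<close>: each nontrivial cut
  \<open>X\<close> of it is crossed by an edge \<open>x y\<close> with \<open>\<nu> \<union> {x, y} \<in> K\<close>.\<close>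

definition crosses_link_cuts :: "'v set \<Rightarrow> nat \<Rightarrow> 'v set set \<Rightarrow> bool" where
  "crosses_link_cuts V d K \<longleftrightarrow>
     (\<forall>\<nu> X. \<nu> \<subseteq> V \<longrightarrow> card \<nu> + 1 = d \<longrightarrow> X \<subseteq> V - \<nu> \<longrightarrow> X \<noteq> {} \<longrightarrow> X \<noteq> V - \<nu> \<longrightarrow>
        (\<exists>x\<in>X. \<exists>y\<in>V - \<nu> - X. insert x (insert y \<nu>) \<in> K))"

lemma crosses_link_cuts_if_hypercuts_meet:
  assumes "1 \<le> d"
    and meet: "\<forall>H :: nat set \<Rightarrow> 'a::field. hypercut n d H \<longrightarrow> supp H \<inter> L \<noteq> {}"
  shows "crosses_link_cuts {1..n} d L"
  unfolding crosses_link_cuts_def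
proof (intro allI impI)
  fix \<nu> X
  assume \<nu>: "\<nu> \<subseteq> {1..n}" "card \<nu> + 1 = d"
    and X: "X \<subseteq> {1..n} - \<nu>" "X \<noteq> {}" "X \<noteq> {1..n} - \<nu>"
  have "finite \<nu>" using \<nu>(1) finite_subset by blast
  obtain a b where a: "a \<in> X" and b: "b \<in> {1..n} - \<nu> - X" using X by blast
  define Z :: "nat set \<Rightarrow> 'a" where "Z = coboundary n (d - 1) (cut_cochain \<nu> X)"
  have "cocycle n d Z" unfolding Z_def using cocycle_coboundary[OF \<open>1 \<le> d\<close>] .
  have "a \<notin> \<nu>" "b \<notin> \<nu>" "a \<noteq> b" using a b X by auto
  define \<sigma>\<^sub>0 where "\<sigma>\<^sub>0 = insert b (insert a \<nu>)"
  have "\<sigma>\<^sub>0 \<in> simplices n d"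
    using a b X \<nu> \<open>finite \<nu>\<close> \<open>a \<notin> \<nu>\<close> \<open>b \<notin> \<nu>\<close> \<open>a \<noteq> b\<close>
    unfolding simplices_def \<sigma>\<^sub>0_def by auto
  then have "Z \<sigma>\<^sub>0 = simplex_sign \<sigma>\<^sub>0 b * simplex_sign (\<sigma>\<^sub>0 - {b}) a"
    using coboundary_cut_cochain_pair[OF \<open>1 \<le> d\<close> _ \<sigma>\<^sub>0_def \<open>finite \<nu>\<close>, of n X] a b X
    unfolding Z_def by auto
  then have "Z \<noteq> (\<lambda>_. 0)" by (metis mult_eq_0_iff simplex_sign_nonzero)
  then obtain H :: "nat set \<Rightarrow> 'a" where "hypercut n d H" "supp H \<subseteq> supp Z"
    using hypercut_in_supp \<open>cocycle n d Z\<close> by blast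
  then obtain \<sigma> where \<sigma>: "\<sigma> \<in> supp Z" "\<sigma> \<in> L" using meet by blast
  then have "\<sigma> \<in> simplices n d" using supp_cocycle \<open>cocycle n d Z\<close> by blast
  then obtain x y where "x \<in> X" "y \<notin> X" "y \<notin> \<nu>" and \<sigma>_eq: "\<sigma> = insert x (insert y \<nu>)"
    using coboundary_cut_cochain_nonzero_crossing[OF \<open>1 \<le> d\<close> _ \<open>finite \<nu>\<close>] \<sigma>(1)
    unfolding Z_def supp_def by blast
  moreover have "y \<in> {1..n}" using \<open>\<sigma> \<in> simplices n d\<close> \<sigma>_eq unfolding simplices_def by auto
  ultimately show "\<exists>x\<in>X. \<exists>y\<in>{1..n} - \<nu> - X. insert x (insert y \<nu>) \<in> L"
    using \<sigma>(2) by blast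
qed

lemma graph_connected_image:
  assumes "graph_connected E A"
    and "\<And>a b. a \<in> A \<Longrightarrow> b \<in> A \<Longrightarrow> E a b \<Longrightarrow> E' (f a) (f b)"
  shows "graph_connected E' (f ` A)"
proof -
  have "(\<lambda>a b. a \<in> f ` A \<and> b \<in> f ` A \<and> E' a b)\<^sup>*\<^sup>* (f x) (f y)"
    if "(\<lambda>a b. a \<in> A \<and> b \<in> A \<and> E a b)\<^sup>*\<^sup>* x y" for x y
    using that
  proof (induction rule: rtranclp_induct)
    case base
    show ?case by simp
  next
    case (step y z)
    then show ?case using assms(2) by (auto intro: rtranclp.rtrancl_into_rtrancl)
  qed
  then show ?thesis using assms(1) unfolding graph_connected_def by auto
qed

lemma graph_connected_UN:
  assumes "I \<noteq> {}"
    and connected: "\<And>i. i \<in> I \<Longrightarrow> graph_connected E (A i)"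
    and overlap: "\<And>i j. i \<in> I \<Longrightarrow> j \<in> I \<Longrightarrow> A i \<inter> A j \<noteq> {}"
  shows "graph_connected E (\<Union>i\<in>I. A i)"
proof -
  let ?R = "\<lambda>B a b. a \<in> B \<and> b \<in> B \<and> E a b"
  let ?U = "\<Union>i\<in>I. A i"
  have lift: "(?R ?U)\<^sup>*\<^sup>* x y" if "i \<in> I" "x \<in> A i" "y \<in> A i" for i x y
  proof -
    have "(?R (A i))\<^sup>*\<^sup>* x y"
      using connected[OF \<open>i \<in> I\<close>] that(2,3) unfolding graph_connected_def by blast
    moreover have "?R (A i) \<le> ?R ?U" using \<open>i \<in> I\<close> by blast
    ultimately show ?thesis by (rule predicate2D[OF rtranclp_mono, rotated])
  qed
  have reach: "(?R ?U)\<^sup>*\<^sup>* x y" if xy: "x \<in> ?U" "y \<in> ?U" for x y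
  proof -
    obtain i j where "i \<in> I" "x \<in> A i" "j \<in> I" "y \<in> A j" using xy by blast
    moreover obtain z where "z \<in> A i" "z \<in> A j" using overlap[OF \<open>i \<in> I\<close> \<open>j \<in> I\<close>] by blast
    ultimately show ?thesis using lift by (meson rtranclp_trans)
  qed
  obtain i where "i \<in> I" using \<open>I \<noteq> {}\<close> by blast
  moreover have "A i \<noteq> {}" using connected[OF \<open>i \<in> I\<close>] unfolding graph_connected_def by blast
  ultimately have "?U \<noteq> {}" by blast
  then show ?thesis unfolding graph_connected_def by (intro conjI ballI reach)
qed

lemma facet_adjI:
  assumes "finite \<sigma>" "card \<sigma> = d + 1" "card \<tau> = d + 1" "\<sigma> \<noteq> \<tau>" "d \<le> card (\<sigma> \<inter> \<tau>)"
  shows "facet_adj d \<sigma> \<tau>"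
proof -
  have "finite \<tau>" by (rule card_ge_0_finite) (simp add: assms(3))
  have "card (\<sigma> \<inter> \<tau>) \<noteq> d + 1"
  proof
    assume "card (\<sigma> \<inter> \<tau>) = d + 1"
    then have "\<sigma> \<inter> \<tau> = \<sigma>" "\<sigma> \<inter> \<tau> = \<tau>"
      using card_subset_eq[OF \<open>finite \<sigma>\<close> Int_lower1] card_subset_eq[OF \<open>finite \<tau>\<close> Int_lower2] assms(2,3)
      by simp_all
    then show False using \<open>\<sigma> \<noteq> \<tau>\<close> by simp
  qed
  moreover have "card (\<sigma> \<inter> \<tau>) \<le> d + 1"
    using card_mono[OF \<open>finite \<sigma>\<close> Int_lower1] assms(2) by simp
  ultimately show ?thesis unfolding facet_adj_def using assms(4,5) by simp
qed

lemma facet_adj_insert: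
  assumes "facet_adj d a b" "v \<notin> a" "v \<notin> b" "finite a"
  shows "facet_adj (Suc d) (insert v a) (insert v b)"
  using assms unfolding facet_adj_def by (auto simp: insert_ident)

definition link :: "'v \<Rightarrow> 'v set set \<Rightarrow> 'v set set" where
  "link v K = (\<lambda>\<sigma>. \<sigma> - {v}) ` {\<sigma> \<in> K. v \<in> \<sigma>}"

lemma link_mono: "T \<subseteq> K \<Longrightarrow> link v T \<subseteq> link v K"
  unfolding link_def by blast

lemma card_link_le: "finite T \<Longrightarrow> card (link v T) \<le> card {t \<in> T. v \<in> t}"
  unfolding link_def by (intro card_image_le) simp

lemma link_pure:
  assumes "\<forall>\<sigma>\<in>K. \<sigma> \<subseteq> V \<and> card \<sigma> = Suc k"
  shows "\<forall>s\<in>link v K. s \<subseteq> V - {v} \<and> card s = k"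
proof
  fix s assume "s \<in> link v K"
  then obtain \<sigma> where "\<sigma> \<in> K" "v \<in> \<sigma>" "s = \<sigma> - {v}" unfolding link_def by blast
  moreover have "finite \<sigma>" using assms \<open>\<sigma> \<in> K\<close> by (intro card_ge_0_finite) simp
  ultimately show "s \<subseteq> V - {v} \<and> card s = k" using assms by auto
qed

lemma star_eq_image_link: "{\<sigma> \<in> K - T. v \<in> \<sigma>} = insert v ` (link v K - link v T)"
proof (intro equalityI subsetI)
  fix \<sigma> assume \<sigma>: "\<sigma> \<in> {\<sigma> \<in> K - T. v \<in> \<sigma>}"
  have "\<sigma> - {v} \<in> link v K" using \<sigma> unfolding link_def by blast
  moreover have "\<sigma> - {v} \<notin> link v T"
  proof
    assume "\<sigma> - {v} \<in> link v T"
    then obtain t where "t \<in> T" "v \<in> t" "\<sigma> - {v} = t - {v}" unfolding link_def by blast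
    then have "\<sigma> = t" using \<sigma> by (metis (no_types, lifting) insert_Diff mem_Collect_eq)
    then show False using \<sigma> \<open>t \<in> T\<close> by blast
  qed
  moreover have "\<sigma> = insert v (\<sigma> - {v})" using \<sigma> by blast
  ultimately show "\<sigma> \<in> insert v ` (link v K - link v T)" by blast
next
  fix \<tau> assume "\<tau> \<in> insert v ` (link v K - link v T)"
  then obtain \<sigma> where "\<sigma> \<in> K" "v \<in> \<sigma>" "\<sigma> - {v} \<notin> link v T" "\<tau> = insert v (\<sigma> - {v})"
    unfolding link_def by blast
  moreover have "\<sigma> \<notin> T" using \<open>v \<in> \<sigma>\<close> \<open>\<sigma> - {v} \<notin> link v T\<close> unfolding link_def by blast
  ultimately show "\<tau> \<in> {\<sigma> \<in> K - T. v \<in> \<sigma>}" by (simp add: insert_absorb)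
qed

lemma graph_connected_star:
  assumes "graph_connected (facet_adj d) (link v K - link v T)" "\<forall>\<sigma>\<in>K. finite \<sigma>"
  shows "graph_connected (facet_adj (Suc d)) {\<sigma> \<in> K - T. v \<in> \<sigma>}"
  unfolding star_eq_image_link
  by (rule graph_connected_image[OF assms(1)], rule facet_adj_insert) (use assms(2) in \<open>auto simp: link_def\<close>)

lemma crosses_link_cuts_link:
  assumes "crosses_link_cuts V (Suc d) K" "v \<in> V" "finite V"
  shows "crosses_link_cuts (V - {v}) d (link v K)"
  unfolding crosses_link_cuts_def
proof (intro allI impI)
  fix \<nu> X
  assume \<nu>: "\<nu> \<subseteq> V - {v}" "card \<nu> + 1 = d"
    and X: "X \<subseteq> V - {v} - \<nu>" "X \<noteq> {}" "X \<noteq> V - {v} - \<nu>"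
  have "v \<notin> \<nu>" "finite \<nu>" using \<nu>(1) \<open>finite V\<close> finite_subset by auto
  then have "card (insert v \<nu>) + 1 = Suc d" using \<nu>(2) by simp
  moreover have "V - insert v \<nu> = V - {v} - \<nu>" by auto
  moreover have "insert v \<nu> \<subseteq> V" using \<nu>(1) \<open>v \<in> V\<close> by blast
  ultimately obtain x y where "x \<in> X" "y \<in> V - {v} - \<nu> - X" "insert x (insert y (insert v \<nu>)) \<in> K"
    using assms(1)[unfolded crosses_link_cuts_def, rule_format, of "insert v \<nu>" X] X by auto
  moreover have "insert x (insert y (insert v \<nu>)) - {v} = insert x (insert y \<nu>)"
    using \<open>x \<in> X\<close> \<open>y \<in> V - {v} - \<nu> - X\<close> X(1) \<open>v \<notin> \<nu>\<close> by auto
  ultimately show "\<exists>x\<in>X. \<exists>y\<in>V - {v} - \<nu> - X. insert x (insert y \<nu>) \<in> link v K"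
    unfolding link_def by (metis (mono_tags, lifting) image_eqI insertI1 insertI2 mem_Collect_eq)
qed

lemma crosses_link_cuts_covers:
  assumes "crosses_link_cuts V d K" "finite V" "d + 2 \<le> card V" "\<sigma> \<subseteq> V" "card \<sigma> = d" "1 \<le> d"
  shows "\<exists>\<kappa>\<in>K. \<sigma> \<subseteq> \<kappa>"
proof -
  obtain a where a: "a \<in> \<sigma>" using assms(5,6) by fastforce
  define \<nu> where "\<nu> = \<sigma> - {a}"
  have "finite \<sigma>" using assms(5,6) by (intro card_ge_0_finite) simp
  then have "card \<nu> + 1 = d" using a assms(5,6) unfolding \<nu>_def by simp
  moreover have "\<nu> \<subseteq> V" "{a} \<subseteq> V - \<nu>" using a assms(4) unfolding \<nu>_def by auto
  moreover have "card (V - \<nu>) \<ge> 2"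
    using \<open>\<nu> \<subseteq> V\<close> \<open>card \<nu> + 1 = d\<close> assms(2,3) by (simp add: card_Diff_subset finite_subset)
  then have "{a} \<noteq> V - \<nu>"
  proof (intro notI)
    assume "2 \<le> card (V - \<nu>)" "{a} = V - \<nu>"
    then have "2 \<le> card {a}" by simp
    then show False by simp
  qed
  ultimately obtain y where "insert a (insert y \<nu>) \<in> K"
    using assms(1) unfolding crosses_link_cuts_def by blast
  moreover have "\<sigma> \<subseteq> insert a (insert y \<nu>)" unfolding \<nu>_def by auto
  ultimately show ?thesis by blast
qed

lemma crosses_link_cuts_graph_connected_1:
  assumes "finite V" "2 \<le> card V" "\<forall>\<sigma>\<in>K. \<sigma> \<subseteq> V \<and> card \<sigma> = 2" "crosses_link_cuts V 1 K"
  shows "graph_connected (facet_adj 1) K"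
proof -
  let ?R = "\<lambda>a b. a \<in> K \<and> b \<in> K \<and> facet_adj 1 a b"
  have crossing: "\<exists>x\<in>X. \<exists>y\<in>V - X. {x, y} \<in> K" if "X \<subseteq> V" "X \<noteq> {}" "X \<noteq> V" for X
    using assms(4)[unfolded crosses_link_cuts_def, rule_format, of "{}" X] that by simp
  have step: "?R\<^sup>*\<^sup>* \<sigma>\<^sub>0 \<tau>" if "?R\<^sup>*\<^sup>* \<sigma>\<^sub>0 \<sigma>" "\<sigma> \<in> K" "\<tau> \<in> K" "\<sigma> \<inter> \<tau> \<noteq> {}" for \<sigma>\<^sub>0 \<sigma> \<tau>
  proof (cases "\<sigma> = \<tau>")
    case False
    have "finite \<sigma>" using assms(3) \<open>\<sigma> \<in> K\<close> by (intro card_ge_0_finite) simp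
    then have "1 \<le> card (\<sigma> \<inter> \<tau>)" using \<open>\<sigma> \<inter> \<tau> \<noteq> {}\<close> by (simp add: Suc_le_eq card_gt_0_iff)
    then have "facet_adj 1 \<sigma> \<tau>" using facet_adjI[OF \<open>finite \<sigma>\<close>] assms(3) that(2,3) False by simp
    then show ?thesis using that(1-3) by (simp add: rtranclp.rtrancl_into_rtrancl)
  qed (use that in simp)
  have reach: "?R\<^sup>*\<^sup>* \<sigma>\<^sub>0 \<tau>" if "\<sigma>\<^sub>0 \<in> K" "\<tau> \<in> K" for \<sigma>\<^sub>0 \<tau>
  proof -
    define reached where "reached = \<Union>{\<sigma> \<in> K. ?R\<^sup>*\<^sup>* \<sigma>\<^sub>0 \<sigma>}"
    have "reached = V"
    proof (rule ccontr)
      assume "reached \<noteq> V"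
      moreover have "reached \<subseteq> V" unfolding reached_def using assms(3) by blast
      moreover have "\<sigma>\<^sub>0 \<subseteq> reached" unfolding reached_def using \<open>\<sigma>\<^sub>0 \<in> K\<close> by blast
      then have "reached \<noteq> {}" using assms(3) \<open>\<sigma>\<^sub>0 \<in> K\<close> by fastforce
      ultimately obtain x y where "x \<in> reached" "y \<in> V - reached" "{x, y} \<in> K"
        using crossing by meson
      then obtain \<sigma> where "\<sigma> \<in> K" "?R\<^sup>*\<^sup>* \<sigma>\<^sub>0 \<sigma>" "x \<in> \<sigma>" unfolding reached_def by blast
      then have "?R\<^sup>*\<^sup>* \<sigma>\<^sub>0 {x, y}" using step \<open>{x, y} \<in> K\<close> by blast
      then have "y \<in> reached" unfolding reached_def using \<open>{x, y} \<in> K\<close> by blast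
      then show False using \<open>y \<in> V - reached\<close> by blast
    qed
    obtain v where "v \<in> \<tau>" using assms(3) \<open>\<tau> \<in> K\<close> by fastforce
    then obtain \<sigma> where "\<sigma> \<in> K" "?R\<^sup>*\<^sup>* \<sigma>\<^sub>0 \<sigma>" "v \<in> \<sigma>"
      using \<open>reached = V\<close> assms(3) \<open>\<tau> \<in> K\<close> unfolding reached_def by blast
    then show ?thesis using step \<open>\<tau> \<in> K\<close> \<open>v \<in> \<tau>\<close> by blast
  qed
  obtain v where "v \<in> V" using assms(2) by fastforce
  moreover have "{v} \<noteq> V" using assms(2) by fastforce
  ultimately have "K \<noteq> {}" using crossing[of "{v}"] by blast
  then show ?thesis unfolding graph_connected_def by (intro conjI ballI reach)
qed

lemma exists_vertex_in_few:
  assumes "finite T" "card T \<le> m" "1 \<le> m" "A \<noteq> {}" "\<forall>t\<in>T. \<not> A \<subseteq> t"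
  shows "\<exists>v\<in>A. card {t \<in> T. v \<in> t} < m"
proof (rule ccontr)
  assume none: "\<not> ?thesis"
  then have all: "{t \<in> T. v \<in> t} = T" if "v \<in> A" for v
    using that assms(1,2) by (intro card_seteq) (auto simp: not_less intro: order_trans)
  obtain v where "v \<in> A" using assms(4) by blast
  have "T \<noteq> {}"
  proof
    assume "T = {}"
    then show False using none \<open>v \<in> A\<close> assms(3) by simp
  qed
  then obtain t where "t \<in> T" by blast
  then have "A \<subseteq> t" using all by blast
  then show False using assms(5) \<open>t \<in> T\<close> by blast
qed

lemma crosses_link_cuts_common_facet:
  assumes "crosses_link_cuts V d K" "finite V" "d + 2 \<le> card V" "1 \<le> d"
    and "finite T" "\<forall>t\<in>T. \<not> V \<subseteq> t"
    and "u \<in> V" "w \<in> V" "card {t \<in> T. u \<in> t} < d - 1"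
  shows "\<exists>\<kappa>\<in>K - T. u \<in> \<kappa> \<and> w \<in> \<kappa>"
proof -
  define P where "P = {t \<in> T. u \<in> t \<and> w \<in> t}"
  have "finite P" unfolding P_def using \<open>finite T\<close> by simp
  have "card P \<le> card {t \<in> T. u \<in> t}"
    unfolding P_def using \<open>finite T\<close> by (intro card_mono) auto
  obtain z where z: "\<And>t. t \<in> P \<Longrightarrow> z t \<in> V \<and> z t \<notin> t"
    using assms(6) unfolding P_def by (metis (mono_tags, lifting) mem_Collect_eq subsetI)
  define A where "A = insert u (insert w (z ` P))"
  have "card A \<le> Suc (Suc (card (z ` P)))"
    unfolding A_def using \<open>finite P\<close> by (simp add: card_insert_if)
  also have "\<dots> \<le> d"
    using card_image_le[OF \<open>finite P\<close>, of z] \<open>card P \<le> _\<close> assms(9) by linarith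
  finally have "card A \<le> d" .
  moreover have "A \<subseteq> V" unfolding A_def using z assms(7,8) by blast
  ultimately obtain B where "A \<subseteq> B" "B \<subseteq> V" "card B = d"
    using exists_subset_between[of A d V] assms(2,3) by auto
  then obtain \<kappa> where "\<kappa> \<in> K" "B \<subseteq> \<kappa>"
    using crosses_link_cuts_covers assms(1-4) by blast
  moreover have "\<kappa> \<notin> T"
  proof
    assume "\<kappa> \<in> T"
    then have "\<kappa> \<in> P" unfolding P_def using \<open>A \<subseteq> B\<close> \<open>B \<subseteq> \<kappa>\<close> A_def by blast
    then show False using z \<open>A \<subseteq> B\<close> \<open>B \<subseteq> \<kappa>\<close> unfolding A_def by blast
  qed
  ultimately show ?thesis using \<open>A \<subseteq> B\<close> unfolding A_def by blast
qed

lemma crosses_link_cuts_graph_connected: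
  assumes "1 \<le> d" "finite V" "d + 2 \<le> card V" "\<forall>\<sigma>\<in>K. \<sigma> \<subseteq> V \<and> card \<sigma> = d + 1"
    and "crosses_link_cuts V d K" "T \<subseteq> K" "card T < max 1 d"
  shows "graph_connected (facet_adj d) (K - T)"
  using assms
proof (induction d arbitrary: V K T rule: nat_induct_at_least)
  case base
  then have "finite T" using finite_subset[of T "Pow V"] by auto
  then have "T = {}" using base.prems(6) by simp
  then show ?case using base.prems crosses_link_cuts_graph_connected_1 by simp
next
  case (Suc m)
  note pure = Suc.prems(3)
  have "finite T" using Suc.prems(1,3,5) finite_subset[of T "Pow V"] by auto
  have "card T \<le> m" using Suc.prems(6) by simp
  have finite_facet: "finite \<sigma>" if "\<sigma> \<in> K" for \<sigma>
    using pure that Suc.prems(1) finite_subset by blast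
  have not_covering: "\<not> V \<subseteq> t" if "t \<in> K" for t
    using pure that Suc.prems(1,2) card_mono[of t V] finite_facet by fastforce
  define few where "few = {v \<in> V. card {t \<in> T. v \<in> t} < m}"
  have star_connected: "graph_connected (facet_adj (Suc m)) {\<sigma> \<in> K - T. v \<in> \<sigma>}" if "v \<in> few" for v
  proof (rule graph_connected_star)
    have "v \<in> V" using that unfolding few_def by simp
    have "card (link v T) < max 1 m"
      using card_link_le[OF \<open>finite T\<close>, of v] that unfolding few_def by simp
    moreover have "\<forall>s\<in>link v K. s \<subseteq> V - {v} \<and> card s = m + 1"
      using link_pure[of K V "m + 1" v] pure by simp
    ultimately show "graph_connected (facet_adj m) (link v K - link v T)"
      using Suc.IH[of "V - {v}" "link v K" "link v T"] Suc.prems(1,2) \<open>v \<in> V\<close>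
        link_mono[OF Suc.prems(5)] crosses_link_cuts_link[OF Suc.prems(4) \<open>v \<in> V\<close> Suc.prems(1)]
      by simp
  qed (use finite_facet in blast)
  have covered: "K - T = (\<Union>v\<in>few. {\<sigma> \<in> K - T. v \<in> \<sigma>})"
  proof (intro equalityI subsetI)
    fix \<sigma> assume "\<sigma> \<in> K - T"
    have "\<not> \<sigma> \<subseteq> t" if "t \<in> T" for t
      using that \<open>\<sigma> \<in> K - T\<close> Suc.prems(5) pure card_subset_eq[of t \<sigma>] finite_facet
      by (metis Diff_iff subsetD)
    moreover have "\<sigma> \<noteq> {}" using pure \<open>\<sigma> \<in> K - T\<close> by force
    ultimately obtain v where "v \<in> \<sigma>" "card {t \<in> T. v \<in> t} < m"
      using exists_vertex_in_few[OF \<open>finite T\<close> \<open>card T \<le> m\<close> Suc.hyps] by blast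
    then show "\<sigma> \<in> (\<Union>v\<in>few. {\<sigma> \<in> K - T. v \<in> \<sigma>})"
      using \<open>\<sigma> \<in> K - T\<close> pure unfolding few_def by blast
  qed blast
  have "few \<noteq> {}"
    using exists_vertex_in_few[OF \<open>finite T\<close> \<open>card T \<le> m\<close> Suc.hyps, of V] Suc.prems(2)
      not_covering Suc.prems(5) unfolding few_def by fastforce
  moreover have "{\<sigma> \<in> K - T. u \<in> \<sigma>} \<inter> {\<sigma> \<in> K - T. w \<in> \<sigma>} \<noteq> {}" if "u \<in> few" "w \<in> few" for u w
    using crosses_link_cuts_common_facet[OF Suc.prems(4,1,2), of T u w] that not_covering
      Suc.prems(5) \<open>finite T\<close> unfolding few_def by fastforce
  ultimately show ?case by (subst covered) (rule graph_connected_UN[OF _ star_connected])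
qed

theorem corollary4p5:
  fixes d r n :: nat and K :: "nat set set"
  assumes "d \<ge> 1" and "r \<ge> 1" and "n \<ge> d + 2"
    and "K \<subseteq> simplices n d"
    and "\<forall>H :: nat set \<Rightarrow> 'a::field. hypercut n d H \<longrightarrow> card (supp H \<inter> K) \<ge> r"
  shows "k_connected (facet_adj d) K (d + r - 1)"
  unfolding k_connected_def
proof (intro allI impI)
  fix S assume S: "S \<subseteq> K \<and> finite S \<and> card S < d + r - 1"
  obtain S' where S': "S' \<subseteq> S" "card S' = min (card S) (r - 1)"
    using obtain_subset_with_card_n[of "min (card S) (r - 1)" S] by auto
  have "finite S'" using S S'(1) finite_subset by blast
  have "supp H \<inter> (K - S') \<noteq> {}" if "hypercut n d H" for H :: "nat set \<Rightarrow> 'a"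
  proof
    assume "supp H \<inter> (K - S') = {}"
    then have "card (supp H \<inter> K) \<le> card S'" using \<open>finite S'\<close> by (intro card_mono) auto
    then show False using assms(2,5) that S'(2) by fastforce
  qed
  then have "crosses_link_cuts {1..n} d (K - S')"
    using crosses_link_cuts_if_hypercuts_meet[OF assms(1)] by blast
  moreover have "card (S - S') < max 1 d"
    using card_Diff_subset[OF \<open>finite S'\<close> S'(1)] S'(2) S assms(1,2) by auto
  moreover have "K - S = (K - S') - (S - S')" using S'(1) by blast
  ultimately show "graph_connected (facet_adj d) (K - S)"
    using crosses_link_cuts_graph_connected[OF assms(1), of "{1..n}" "K - S'" "S - S'"] assms(3,4) S
    unfolding simplices_def by auto
qed

end
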